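(* Let $D$ be an integral domain, $S$ a multiplicative subset of $D$, and $M$ a torsion-free unitary $D$-module. Then: (1) If $M$ is an $S$-Noetherian module, then $M$ is a locally $S$-Noetherian module. (2) If $M$ is a locally $S$-Noetherian module which has finite character, then $M$ is an $S$-Noetherian module.
   Context: A submodule $L$ of $M$ is $S$-finite if there exist $s\in S$ and a finitely generated submodule $F$ of $M$ with $Ls\subseteq F\subseteq L$; $M$ is $S$-Noetherian if every submodule is $S$-finite. $M$ is locally $S$-Noetherian if for each maximal ideal $\mathfrak{m}$ of $D$, $M_{\mathfrak{m}}$ is an $S$-Noetherian $D_{\mathfrak{m}}$-module (with $S$ viewed inside $D_{\mathfrak{m}}$). For a submodule $L$, $(L:M)=\{d\in D\mid Md\subseteq L\}$. $M$ has finite character if for each nonzero $a\in M$ with $(aD:M)\neq D$, the ideal $(aD:M)$ is contained in only finitely many maximal ideals of $D$. *)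

theory Defs
  imports "HOL-Algebra.Module" "HOL-Algebra.Ideal"
begin

definition mod_span :: "('a, 'c) ring_scheme \<Rightarrow> ('a, 'b) module \<Rightarrow> 'b set \<Rightarrow> 'b set" where
  "mod_span R M G = \<Inter>{N. submodule N R M \<and> G \<subseteq> N}"

definition fin_gen_submodule :: "('a, 'c) ring_scheme \<Rightarrow> ('a, 'b) module \<Rightarrow> 'b set \<Rightarrow> bool" where
  "fin_gen_submodule R M F \<longleftrightarrow>
     (\<exists>G. finite G \<and> G \<subseteq> carrier M \<and> F = mod_span R M G)"

definition S_finite :: "('a, 'c) ring_scheme \<Rightarrow> ('a, 'b) module \<Rightarrow> 'a set \<Rightarrow> 'b set \<Rightarrow> bool" where
  "S_finite R M S L \<longleftrightarrow>
     (\<exists>s\<in>S. \<exists>F. fin_gen_submodule R M F \<and> (\<forall>x\<in>L. s \<odot>\<^bsub>M\<^esub> x \<in> F) \<and> F \<subseteq> L)"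

definition S_noetherian :: "('a, 'c) ring_scheme \<Rightarrow> ('a, 'b) module \<Rightarrow> 'a set \<Rightarrow> bool" where
  "S_noetherian R M S \<longleftrightarrow> (\<forall>L. submodule L R M \<longrightarrow> S_finite R M S L)"

definition mult_subset :: "('a, 'c) ring_scheme \<Rightarrow> 'a set \<Rightarrow> bool" where
  "mult_subset R S \<longleftrightarrow> S \<subseteq> carrier R \<and> \<one>\<^bsub>R\<^esub> \<in> S \<and>
     (\<forall>s\<in>S. \<forall>t\<in>S. s \<otimes>\<^bsub>R\<^esub> t \<in> S)"

definition torsion_free :: "('a, 'c) ring_scheme \<Rightarrow> ('a, 'b) module \<Rightarrow> bool" where
  "torsion_free R M \<longleftrightarrow>
     (\<forall>d\<in>carrier R. \<forall>x\<in>carrier M. d \<odot>\<^bsub>M\<^esub> x = \<zero>\<^bsub>M\<^esub> \<longrightarrow> d = \<zero>\<^bsub>R\<^esub> \<or> x = \<zero>\<^bsub>M\<^esub>)"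

definition mod_colon :: "('a, 'c) ring_scheme \<Rightarrow> ('a, 'b) module \<Rightarrow> 'b set \<Rightarrow> 'a set" where
  "mod_colon R M L = {d \<in> carrier R. \<forall>x\<in>carrier M. d \<odot>\<^bsub>M\<^esub> x \<in> L}"

definition cyclic_sub :: "('a, 'c) ring_scheme \<Rightarrow> ('a, 'b) module \<Rightarrow> 'b \<Rightarrow> 'b set" where
  "cyclic_sub R M a = {d \<odot>\<^bsub>M\<^esub> a | d. d \<in> carrier R}"

definition finite_character :: "('a, 'c) ring_scheme \<Rightarrow> ('a, 'b) module \<Rightarrow> bool" where
  "finite_character R M \<longleftrightarrow>
     (\<forall>a\<in>carrier M. a \<noteq> \<zero>\<^bsub>M\<^esub> \<and> mod_colon R M (cyclic_sub R M a) \<noteq> carrier R \<longrightarrow>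
        finite {P. maximalideal P R \<and> mod_colon R M (cyclic_sub R M a) \<subseteq> P})"

text \<open>Fractions x/t with x \<in> M, t \<in> T; x/t = y/u iff v u x = v t y for some v \<in> T.\<close>
definition loc_eq :: "('a, 'c) ring_scheme \<Rightarrow> ('a, 'b) module \<Rightarrow> 'a set \<Rightarrow> 'b \<times> 'a \<Rightarrow> 'b \<times> 'a \<Rightarrow> bool" where
  "loc_eq R M T p q \<longleftrightarrow>
     fst p \<in> carrier M \<and> snd p \<in> T \<and> fst q \<in> carrier M \<and> snd q \<in> T \<and>
     (\<exists>v\<in>T. (v \<otimes>\<^bsub>R\<^esub> snd q) \<odot>\<^bsub>M\<^esub> fst p = (v \<otimes>\<^bsub>R\<^esub> snd p) \<odot>\<^bsub>M\<^esub> fst q)"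

definition loc_cls :: "('a, 'c) ring_scheme \<Rightarrow> ('a, 'b) module \<Rightarrow> 'a set \<Rightarrow> 'b \<times> 'a \<Rightarrow> ('b \<times> 'a) set" where
  "loc_cls R M T p = {q. loc_eq R M T p q}"

definition loc_rep :: "('b \<times> 'a) set \<Rightarrow> 'b \<times> 'a" where
  "loc_rep A = (SOME p. p \<in> A)"

definition loc_carrier :: "('a, 'c) ring_scheme \<Rightarrow> ('a, 'b) module \<Rightarrow> 'a set \<Rightarrow> ('b \<times> 'a) set set" where
  "loc_carrier R M T = loc_cls R M T ` (carrier M \<times> T)"

definition loc_add :: "('a, 'c) ring_scheme \<Rightarrow> ('a, 'b) module \<Rightarrow> 'a set \<Rightarrow>
    ('b \<times> 'a) set \<Rightarrow> ('b \<times> 'a) set \<Rightarrow> ('b \<times> 'a) set" where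
  "loc_add R M T A B =
     (let (x, t) = loc_rep A; (y, u) = loc_rep B
      in loc_cls R M T ((u \<odot>\<^bsub>M\<^esub> x) \<oplus>\<^bsub>M\<^esub> (t \<odot>\<^bsub>M\<^esub> y), t \<otimes>\<^bsub>R\<^esub> u))"

definition self_module :: "('a, 'c) ring_scheme \<Rightarrow> ('a, 'a) module" where
  "self_module R = \<lparr>carrier = carrier R, mult = mult R, one = one R,
                    zero = zero R, add = add R, smult = mult R\<rparr>"

definition loc_ring :: "('a, 'c) ring_scheme \<Rightarrow> 'a set \<Rightarrow> ('a \<times> 'a) set ring" where
  "loc_ring R T =
     \<lparr>carrier = loc_carrier R (self_module R) T,
      mult = (\<lambda>A B. let (a, t) = loc_rep A; (b, u) = loc_rep B
                     in loc_cls R (self_module R) T (a \<otimes>\<^bsub>R\<^esub> b, t \<otimes>\<^bsub>R\<^esub> u)),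
      one = loc_cls R (self_module R) T (\<one>\<^bsub>R\<^esub>, \<one>\<^bsub>R\<^esub>),
      zero = loc_cls R (self_module R) T (\<zero>\<^bsub>R\<^esub>, \<one>\<^bsub>R\<^esub>),
      add = loc_add R (self_module R) T\<rparr>"

definition loc_module :: "('a, 'c) ring_scheme \<Rightarrow> ('a, 'b) module \<Rightarrow> 'a set \<Rightarrow>
    (('a \<times> 'a) set, ('b \<times> 'a) set) module" where
  "loc_module R M T =
     \<lparr>carrier = loc_carrier R M T,
      mult = (\<lambda>_ _. undefined), one = undefined,
      zero = loc_cls R M T (\<zero>\<^bsub>M\<^esub>, \<one>\<^bsub>R\<^esub>),
      add = loc_add R M T,
      smult = (\<lambda>A X. let (r, t) = loc_rep A; (x, u) = loc_rep X
                      in loc_cls R M T (r \<odot>\<^bsub>M\<^esub> x, t \<otimes>\<^bsub>R\<^esub> u))\<rparr>"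

definition loc_image :: "('a, 'c) ring_scheme \<Rightarrow> 'a set \<Rightarrow> 'a set \<Rightarrow> ('a \<times> 'a) set set" where
  "loc_image R T S = (\<lambda>s. loc_cls R (self_module R) T (s, \<one>\<^bsub>R\<^esub>)) ` S"

definition locally_S_noetherian :: "('a, 'c) ring_scheme \<Rightarrow> ('a, 'b) module \<Rightarrow> 'a set \<Rightarrow> bool" where
  "locally_S_noetherian R M S \<longleftrightarrow>
     (\<forall>P. maximalideal P R \<longrightarrow>
        S_noetherian (loc_ring R (carrier R - P)) (loc_module R M (carrier R - P))
                     (loc_image R (carrier R - P) S))"

end

theory Submission
  imports "HOL-Algebra.Ring_Divisibility" Defs
begin

text \<open>
  Part (1): for a maximal ideal \<open>P\<close> put \<open>T = D - P\<close>. A submodule \<open>L\<close> of \<open>M\<^sub>T\<close> contracts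
  to the submodule \<open>{x. x/t \<in> L for all t \<in> T}\<close> of \<open>M\<close>. If \<open>s\<close> times this contraction lies in
  a span \<open>\<langle>G\<rangle>\<close> contained in the contraction, then \<open>s/1\<close> times \<open>L\<close> lies in \<open>\<langle>G/1\<rangle> \<subseteq> L\<close>.

  Part (2): S-finiteness of the extension \<open>N\<^sub>T\<close> of a submodule \<open>N\<close> yields \<open>s \<in> S\<close> and a
  finite \<open>Y \<subseteq> N\<close> such that \<open>s N\<close> lies in the \<open>T\<close>-saturation of \<open>\<langle>Y\<rangle>\<close>. For \<open>0 \<noteq> a \<in> N\<close>,
  finite character leaves only finitely many maximal ideals above \<open>(aD : M)\<close>; multiplying
  their elements \<open>s\<close> and uniting their sets \<open>Y\<close> gives a common witness. Then
  \<open>s N \<subseteq> \<langle>a, Y\<rangle>\<close>: for \<open>x \<in> N\<close> the ideal of all \<open>d\<close> with \<open>d s x \<in> \<langle>a, Y\<rangle>\<close> lies in no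
  maximal ideal \<open>P\<close>, by the witness if \<open>P\<close> contains \<open>(aD : M)\<close>, and otherwise because an
  element of \<open>(aD : M)\<close> outside \<open>P\<close> already moves \<open>s x\<close> into \<open>aD\<close>.
\<close>

lemma (in submodule) zero_closed: "\<zero>\<^bsub>M\<^esub> \<in> H"
  using one_closed by simp

lemma (in submodule) a_closed: "x \<in> H \<Longrightarrow> y \<in> H \<Longrightarrow> x \<oplus>\<^bsub>M\<^esub> y \<in> H"
  using m_closed by simp

lemma (in submodule) a_inv_closed: "x \<in> H \<Longrightarrow> \<ominus>\<^bsub>M\<^esub> x \<in> H"
  using m_inv_closed by (simp add: a_inv_def)

lemma (in submodule) subset_carrier: "H \<subseteq> carrier M"
  using subset by simp

lemma mod_span_least: "submodule N R M \<Longrightarrow> G \<subseteq> N \<Longrightarrow> mod_span R M G \<subseteq> N"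
  unfolding mod_span_def by blast

lemma mod_span_incl: "G \<subseteq> mod_span R M G"
  unfolding mod_span_def by blast

lemma mod_span_mono: "G \<subseteq> G' \<Longrightarrow> mod_span R M G \<subseteq> mod_span R M G'"
  unfolding mod_span_def by blast

lemma submodule_mod_span:
  fixes M :: "('a, 'b) module"
  assumes "module R M" "G \<subseteq> carrier M"
  shows "submodule (mod_span R M G) R M"
proof (rule module.submoduleI[OF assms(1)])
  show "mod_span R M G \<subseteq> carrier M"
    using mod_span_least[OF module.carrier_is_submodule[OF assms(1)] assms(2)] .
qed (auto simp: mod_span_def intro: submodule.zero_closed submodule.a_closed
    submodule.a_inv_closed submodule.smult_closed)

lemma (in ring) ex_maximalideal_superset:
  assumes I: "ideal I R" "I \<noteq> carrier R"
  obtains P where "maximalideal P R" "I \<subseteq> P"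
proof -
  define A where "A = {J. ideal J R \<and> I \<subseteq> J \<and> J \<noteq> carrier R}"
  have "\<exists>P\<in>A. \<forall>J\<in>A. P \<subseteq> J \<longrightarrow> J = P"
  proof (rule subset_Zorn_nonempty)
    show "A \<noteq> {}"
      using I unfolding A_def by blast
  next
    fix C assume C: "C \<noteq> {}" "subset.chain A C"
    then have "subset.chain {J. ideal J R} C" and CA: "C \<subseteq> A"
      unfolding pred_on.chain_def A_def by auto
    then have "ideal (\<Union>C) R"
      using chain_Union_is_ideal[of C] C(1) by simp
    moreover have "\<Union>C \<noteq> carrier R"
    proof
      assume "\<Union>C = carrier R"
      then obtain J where "J \<in> C" "\<one> \<in> J"
        by (metis UnionE one_closed)
      then show False
        using CA ideal.one_imp_carrier unfolding A_def by blast
    qed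
    ultimately show "\<Union>C \<in> A"
      using C CA unfolding A_def by blast
  qed
  then obtain P where P: "P \<in> A" "\<And>J. J \<in> A \<Longrightarrow> P \<subseteq> J \<Longrightarrow> J = P"
    by blast
  have "maximalideal P R"
  proof (rule maximalidealI)
    show "ideal P R" "carrier R \<noteq> P"
      using P(1) unfolding A_def by auto
    show "J = P \<or> J = carrier R" if "ideal J R" "P \<subseteq> J" "J \<subseteq> carrier R" for J
      using that P unfolding A_def by blast
  qed
  with P(1) that show thesis
    unfolding A_def by blast
qed

lemma (in module) ideal_smult_preimage:
  assumes J: "submodule J R M" and z: "z \<in> carrier M"
  shows "ideal {d \<in> carrier R. d \<odot>\<^bsub>M\<^esub> z \<in> J} R"
proof (rule idealI)
  show "ring R" by (rule ring_axioms)
  show "subgroup {d \<in> carrier R. d \<odot>\<^bsub>M\<^esub> z \<in> J} (add_monoid R)"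
    using z submodule.zero_closed[OF J] submodule.a_closed[OF J] submodule.a_inv_closed[OF J]
    by unfold_locales (auto simp: smult_l_distr smult_l_minus a_inv_def[symmetric])
  show "x \<otimes> d \<in> {d \<in> carrier R. d \<odot>\<^bsub>M\<^esub> z \<in> J}"
    and "d \<otimes> x \<in> {d \<in> carrier R. d \<odot>\<^bsub>M\<^esub> z \<in> J}"
    if "d \<in> {d \<in> carrier R. d \<odot>\<^bsub>M\<^esub> z \<in> J}" "x \<in> carrier R" for d x
    using that z submodule.smult_closed[OF J] by (auto simp: smult_assoc1 m_comm[of d x])
qed

definition saturation ::
    "('a, 'c) ring_scheme \<Rightarrow> ('a, 'b, 'd) module_scheme \<Rightarrow> 'a set \<Rightarrow> 'b set \<Rightarrow> 'b set" where
  "saturation R M T L = {x \<in> carrier M. \<exists>t\<in>T. t \<odot>\<^bsub>M\<^esub> x \<in> L}"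

lemma saturation_mono: "L \<subseteq> L' \<Longrightarrow> saturation R M T L \<subseteq> saturation R M T L'"
  unfolding saturation_def by blast

lemma (in module) saturation_smult_mono:
  assumes L': "submodule L' R M" and L: "L \<subseteq> L'" and T: "T \<subseteq> carrier R" and r: "r \<in> carrier R"
    and x: "x \<in> saturation R M T L"
  shows "r \<odot>\<^bsub>M\<^esub> x \<in> saturation R M T L'"
proof -
  obtain t where t: "t \<in> T" "t \<odot>\<^bsub>M\<^esub> x \<in> L" and xc: "x \<in> carrier M"
    using x unfolding saturation_def by blast
  have "t \<odot>\<^bsub>M\<^esub> (r \<odot>\<^bsub>M\<^esub> x) = r \<odot>\<^bsub>M\<^esub> (t \<odot>\<^bsub>M\<^esub> x)"
    using t(1) T r xc by (metis m_comm smult_assoc1 subsetD)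
  also have "\<dots> \<in> L'"
    using submodule.smult_closed[OF L' r] t(2) L by blast
  finally have "t \<odot>\<^bsub>M\<^esub> (r \<odot>\<^bsub>M\<^esub> x) \<in> L'" .
  moreover have "r \<odot>\<^bsub>M\<^esub> x \<in> carrier M"
    using r xc by simp
  ultimately show ?thesis
    unfolding saturation_def using t(1) by blast
qed

lemma (in module) mem_submodule_if_locally:
  assumes J: "submodule J R M" and z: "z \<in> carrier M"
    and local: "\<And>P. maximalideal P R \<Longrightarrow> z \<in> saturation R M (carrier R - P) J"
  shows "z \<in> J"
proof -
  let ?I = "{d \<in> carrier R. d \<odot>\<^bsub>M\<^esub> z \<in> J}"
  have "?I = carrier R"
  proof (rule ccontr)
    assume "?I \<noteq> carrier R"
    then obtain P where "maximalideal P R" "?I \<subseteq> P"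
      using ex_maximalideal_superset[OF ideal_smult_preimage[OF J z]] by blast
    with local show False
      unfolding saturation_def by blast
  qed
  then have "\<one> \<odot>\<^bsub>M\<^esub> z \<in> J"
    using one_closed by blast
  with z show ?thesis
    by simp
qed

lemma finite_character_finite_maximalideals:
  assumes "finite_character R M" "a \<in> carrier M" "a \<noteq> \<zero>\<^bsub>M\<^esub>"
  shows "finite {P. maximalideal P R \<and> mod_colon R M (cyclic_sub R M a) \<subseteq> P}"
proof (cases "mod_colon R M (cyclic_sub R M a) = carrier R")
  case True
  have "\<not> carrier R \<subseteq> P" if "maximalideal P R" for P
  proof
    assume "carrier R \<subseteq> P"
    moreover have "P \<subseteq> carrier R"
      using ideal.Icarr[OF maximalideal.axioms(1)[OF that]] by blast
    ultimately show False
      using maximalideal.I_notcarr[OF that] by blast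
  qed
  with True have "{P. maximalideal P R \<and> mod_colon R M (cyclic_sub R M a) \<subseteq> P} = {}"
    by blast
  then show ?thesis
    by (metis finite.emptyI)
next
  case False
  with assms show ?thesis
    unfolding finite_character_def by blast
qed

lemma mem_mod_span_insert_if_locally:
  fixes M :: "('a, 'b) module"
  assumes M: "module R M" and Y: "Y \<subseteq> carrier M" and a: "a \<in> carrier M" and z: "z \<in> carrier M"
    and local: "\<And>P. maximalideal P R \<Longrightarrow> mod_colon R M (cyclic_sub R M a) \<subseteq> P \<Longrightarrow>
                  z \<in> saturation R M (carrier R - P) (mod_span R M Y)"
  shows "z \<in> mod_span R M (insert a Y)"
proof (rule module.mem_submodule_if_locally[OF M _ z])
  let ?J = "mod_span R M (insert a Y)"
  show J: "submodule ?J R M"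
    using submodule_mod_span[OF M] Y a by blast
  fix P assume P: "maximalideal P R"
  show "z \<in> saturation R M (carrier R - P) ?J"
  proof (cases "mod_colon R M (cyclic_sub R M a) \<subseteq> P")
    case True
    then show ?thesis
      using local[OF P] saturation_mono[OF mod_span_mono[of Y "insert a Y"]] by blast
  next
    case False
    then obtain c where c: "c \<in> carrier R" "c \<notin> P" "c \<odot>\<^bsub>M\<^esub> z \<in> cyclic_sub R M a"
      using z unfolding mod_colon_def by blast
    then obtain d where d: "d \<in> carrier R" "c \<odot>\<^bsub>M\<^esub> z = d \<odot>\<^bsub>M\<^esub> a"
      unfolding cyclic_sub_def by blast
    have "a \<in> ?J"
      using mod_span_incl[of "insert a Y" R M] by blast
    then have "c \<odot>\<^bsub>M\<^esub> z \<in> ?J"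
      unfolding d(2) by (rule submodule.smult_closed[OF J d(1)])
    with c(1,2) z show ?thesis
      unfolding saturation_def by blast
  qed
qed

lemma ex_common_S_witness:
  fixes M :: "('a, 'b) module"
  assumes M: "module R M" and S: "mult_subset R S" and N: "N \<subseteq> carrier M" and A: "finite A"
    and T: "\<And>i. i \<in> A \<Longrightarrow> T i \<subseteq> carrier R"
    and witness: "\<And>i. i \<in> A \<Longrightarrow> \<exists>s\<in>S. \<exists>Y. finite Y \<and> Y \<subseteq> N \<and>
                    (\<forall>x\<in>N. s \<odot>\<^bsub>M\<^esub> x \<in> saturation R M (T i) (mod_span R M Y))"
  shows "\<exists>s\<in>S. \<exists>Y. finite Y \<and> Y \<subseteq> N \<and>
           (\<forall>i\<in>A. \<forall>x\<in>N. s \<odot>\<^bsub>M\<^esub> x \<in> saturation R M (T i) (mod_span R M Y))"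
  using A T witness
proof (induction A rule: finite_induct)
  case empty
  have "\<one>\<^bsub>R\<^esub> \<in> S"
    using S unfolding mult_subset_def by blast
  then show ?case
    by (intro bexI[of _ "\<one>\<^bsub>R\<^esub>"] exI[of _ "{}"]) auto
next
  case (insert i A)
  interpret module R M by fact
  have "\<exists>s\<in>S. \<exists>Y. finite Y \<and> Y \<subseteq> N \<and>
          (\<forall>j\<in>A. \<forall>x\<in>N. s \<odot>\<^bsub>M\<^esub> x \<in> saturation R M (T j) (mod_span R M Y))"
    using insert.prems by (intro insert.IH) auto
  then obtain s Y where s: "s \<in> S" "finite Y" "Y \<subseteq> N"
    and sY: "\<forall>j\<in>A. \<forall>x\<in>N. s \<odot>\<^bsub>M\<^esub> x \<in> saturation R M (T j) (mod_span R M Y)"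
    by blast
  obtain s' Y' where s': "s' \<in> S" "finite Y'" "Y' \<subseteq> N"
    and sY': "\<forall>x\<in>N. s' \<odot>\<^bsub>M\<^esub> x \<in> saturation R M (T i) (mod_span R M Y')"
    using insert.prems(2)[OF insertI1] by blast
  have carr: "s \<in> carrier R" "s' \<in> carrier R"
    using s(1) s'(1) S unfolding mult_subset_def by auto
  let ?U = "mod_span R M (Y \<union> Y')"
  have U: "submodule ?U R M"
    using submodule_mod_span[OF M] s(3) s'(3) N by blast
  have "(s \<otimes>\<^bsub>R\<^esub> s') \<odot>\<^bsub>M\<^esub> x \<in> saturation R M (T j) ?U"
    if j: "j \<in> insert i A" and x: "x \<in> N" for j x
  proof -
    have Tj: "T j \<subseteq> carrier R"
      using insert.prems(1) j by blast
    have "(s \<otimes>\<^bsub>R\<^esub> s') \<odot>\<^bsub>M\<^esub> x = s \<odot>\<^bsub>M\<^esub> (s' \<odot>\<^bsub>M\<^esub> x)"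
      and "(s \<otimes>\<^bsub>R\<^esub> s') \<odot>\<^bsub>M\<^esub> x = s' \<odot>\<^bsub>M\<^esub> (s \<odot>\<^bsub>M\<^esub> x)"
      using carr x N by (metis m_comm smult_assoc1 subsetD)+
    moreover have "s \<odot>\<^bsub>M\<^esub> (s' \<odot>\<^bsub>M\<^esub> x) \<in> saturation R M (T j) ?U" if "j = i"
      using saturation_smult_mono[OF U mod_span_mono[OF Un_upper2] Tj carr(1)] sY' x that by blast
    moreover have "s' \<odot>\<^bsub>M\<^esub> (s \<odot>\<^bsub>M\<^esub> x) \<in> saturation R M (T j) ?U" if "j \<noteq> i"
      using saturation_smult_mono[OF U mod_span_mono[OF Un_upper1] Tj carr(2)] sY x j that by blast
    ultimately show ?thesis
      by metis
  qed
  moreover have "s \<otimes>\<^bsub>R\<^esub> s' \<in> S"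
    using S s(1) s'(1) unfolding mult_subset_def by blast
  ultimately show ?case
    using s s' by (intro bexI[of _ "s \<otimes>\<^bsub>R\<^esub> s'"] exI[of _ "Y \<union> Y'"]) auto
qed

definition loc_extension ::
    "('a, 'c) ring_scheme \<Rightarrow> ('a, 'b) module \<Rightarrow> 'a set \<Rightarrow> 'b set \<Rightarrow> ('b \<times> 'a) set set" where
  "loc_extension R M T N = loc_cls R M T ` (N \<times> T)"

definition loc_contraction ::
    "('a, 'c) ring_scheme \<Rightarrow> ('a, 'b) module \<Rightarrow> 'a set \<Rightarrow> ('b \<times> 'a) set set \<Rightarrow> 'b set" where
  "loc_contraction R M T L = {x \<in> carrier M. \<forall>t\<in>T. loc_cls R M T (x, t) \<in> L}"

lemma self_module_simps [simp]:
  "carrier (self_module R) = carrier R"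
  "a \<odot>\<^bsub>self_module R\<^esub> b = a \<otimes>\<^bsub>R\<^esub> b"
  unfolding self_module_def by simp_all

lemma loc_rep_obtain:
  assumes "x \<in> carrier M" "t \<in> T"
  obtains x' t' v where "loc_rep (loc_cls R M T (x, t)) = (x', t')"
    "x' \<in> carrier M" "t' \<in> T" "v \<in> T" "(v \<otimes>\<^bsub>R\<^esub> t') \<odot>\<^bsub>M\<^esub> x = (v \<otimes>\<^bsub>R\<^esub> t) \<odot>\<^bsub>M\<^esub> x'"
proof -
  have "(x, t) \<in> loc_cls R M T (x, t)"
    using assms unfolding loc_cls_def loc_eq_def by auto
  then have "loc_rep (loc_cls R M T (x, t)) \<in> loc_cls R M T (x, t)"
    unfolding loc_rep_def by (rule someI)
  moreover obtain x' t' where rep: "loc_rep (loc_cls R M T (x, t)) = (x', t')"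
    by fastforce
  ultimately have "loc_eq R M T (x, t) (x', t')"
    unfolding loc_cls_def by simp
  then show thesis
    using that rep unfolding loc_eq_def by auto
qed

locale module_localization = module R M
  for R :: "('a, 'c) ring_scheme" (structure) and M :: "('a, 'b) module" (structure) +
  fixes T :: "'a set"
  assumes T_subset: "T \<subseteq> carrier R" and T_one: "\<one> \<in> T"
    and T_mult: "s \<in> T \<Longrightarrow> t \<in> T \<Longrightarrow> s \<otimes> t \<in> T"
begin

abbreviation "cls \<equiv> loc_cls R M T"
abbreviation "rcls \<equiv> loc_cls R (self_module R) T"
abbreviation "LM \<equiv> loc_module R M T"
abbreviation "LR \<equiv> loc_ring R T"

lemma T_carrier [simp]: "t \<in> T \<Longrightarrow> t \<in> carrier R"
  using T_subset by blast

lemma loc_eq_refl: "x \<in> carrier M \<Longrightarrow> t \<in> T \<Longrightarrow> loc_eq R M T (x, t) (x, t)"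
  unfolding loc_eq_def using T_one by auto

lemma loc_eq_sym: "loc_eq R M T p q \<Longrightarrow> loc_eq R M T q p"
  unfolding loc_eq_def by metis

lemma loc_eq_trans:
  assumes "loc_eq R M T p q" "loc_eq R M T q r"
  shows "loc_eq R M T p r"
proof -
  obtain x1 t1 x2 t2 x3 t3 where P: "p = (x1, t1)" "q = (x2, t2)" "r = (x3, t3)"
    by (cases p, cases q, cases r) auto
  from assms obtain v w where v: "v \<in> T" "(v \<otimes> t2) \<odot>\<^bsub>M\<^esub> x1 = (v \<otimes> t1) \<odot>\<^bsub>M\<^esub> x2"
    and w: "w \<in> T" "(w \<otimes> t3) \<odot>\<^bsub>M\<^esub> x2 = (w \<otimes> t2) \<odot>\<^bsub>M\<^esub> x3"
    and c: "x1 \<in> carrier M" "x2 \<in> carrier M" "x3 \<in> carrier M" "t1 \<in> T" "t2 \<in> T" "t3 \<in> T"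
    unfolding loc_eq_def P by auto
  have "((v \<otimes> w \<otimes> t2) \<otimes> t3) \<odot>\<^bsub>M\<^esub> x1 = (w \<otimes> t3) \<odot>\<^bsub>M\<^esub> ((v \<otimes> t2) \<odot>\<^bsub>M\<^esub> x1)"
    using v(1) w(1) c by (simp add: smult_assoc1[symmetric] m_ac)
  also have "\<dots> = (v \<otimes> t1) \<odot>\<^bsub>M\<^esub> ((w \<otimes> t3) \<odot>\<^bsub>M\<^esub> x2)"
    using v w(1) c by (simp add: smult_assoc1[symmetric] m_ac)
  also have "\<dots> = ((v \<otimes> w \<otimes> t2) \<otimes> t1) \<odot>\<^bsub>M\<^esub> x3"
    using v(1) w c by (simp add: smult_assoc1[symmetric] m_ac)
  finally show ?thesis
    unfolding P loc_eq_def using c v(1) w(1) T_mult by auto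
qed

lemma cls_eq_iff: "x \<in> carrier M \<Longrightarrow> t \<in> T \<Longrightarrow> cls (x, t) = cls q \<longleftrightarrow> loc_eq R M T (x, t) q"
  unfolding loc_cls_def using loc_eq_refl loc_eq_sym loc_eq_trans by blast

lemma cls_scale: "x \<in> carrier M \<Longrightarrow> t \<in> T \<Longrightarrow> u \<in> T \<Longrightarrow> cls (u \<odot>\<^bsub>M\<^esub> x, t \<otimes> u) = cls (x, t)"
  by (subst cls_eq_iff)
    (auto simp: loc_eq_def T_mult smult_assoc1[symmetric] m_ac intro!: bexI[of _ "\<one>"] T_one)

lemma carrier_loc_module: "carrier LM = cls ` (carrier M \<times> T)"
  unfolding loc_module_def loc_carrier_def by simp

lemma carrier_loc_ring: "carrier LR = rcls ` (carrier R \<times> T)"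
  unfolding loc_ring_def loc_carrier_def by simp

lemma zero_loc_module: "\<zero>\<^bsub>LM\<^esub> = cls (\<zero>\<^bsub>M\<^esub>, \<one>)"
  unfolding loc_module_def by simp

lemma cls_zero: "t \<in> T \<Longrightarrow> cls (\<zero>\<^bsub>M\<^esub>, t) = \<zero>\<^bsub>LM\<^esub>"
  unfolding zero_loc_module using T_one by (subst cls_eq_iff) (auto simp: loc_eq_def)

lemma smult_cls:
  assumes "r \<in> carrier R" "t \<in> T" "x \<in> carrier M" "u \<in> T"
  shows "rcls (r, t) \<odot>\<^bsub>LM\<^esub> cls (x, u) = cls (r \<odot>\<^bsub>M\<^esub> x, t \<otimes> u)"
proof -
  obtain r' t' v where r: "loc_rep (rcls (r, t)) = (r', t')" "r' \<in> carrier R" "t' \<in> T" "v \<in> T"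
    "(v \<otimes> t') \<otimes> r = (v \<otimes> t) \<otimes> r'"
    by (rule loc_rep_obtain[of r "self_module R" t T R]) (use assms in simp_all)
  obtain x' u' w where x: "loc_rep (cls (x, u)) = (x', u')" "x' \<in> carrier M" "u' \<in> T" "w \<in> T"
    "(w \<otimes> u') \<odot>\<^bsub>M\<^esub> x = (w \<otimes> u) \<odot>\<^bsub>M\<^esub> x'"
    by (rule loc_rep_obtain[OF assms(3,4)])
  note carr = assms r(2-4) x(2-4)
  have "((v \<otimes> w) \<otimes> (t' \<otimes> u')) \<odot>\<^bsub>M\<^esub> (r \<odot>\<^bsub>M\<^esub> x) = ((v \<otimes> t') \<otimes> r) \<odot>\<^bsub>M\<^esub> ((w \<otimes> u') \<odot>\<^bsub>M\<^esub> x)"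
    using carr by (simp add: smult_assoc1[symmetric] m_ac)
  also have "\<dots> = ((v \<otimes> w) \<otimes> (t \<otimes> u)) \<odot>\<^bsub>M\<^esub> (r' \<odot>\<^bsub>M\<^esub> x')"
    unfolding r(5) x(5) using carr by (simp add: smult_assoc1[symmetric] m_ac)
  finally have "cls (r \<odot>\<^bsub>M\<^esub> x, t \<otimes> u) = cls (r' \<odot>\<^bsub>M\<^esub> x', t' \<otimes> u')"
    using carr T_mult by (subst cls_eq_iff) (auto simp: loc_eq_def)
  then show ?thesis
    unfolding loc_module_def using r(1) x(1) by simp
qed

lemma add_cls:
  assumes "x \<in> carrier M" "t \<in> T" "y \<in> carrier M" "u \<in> T"
  shows "cls (x, t) \<oplus>\<^bsub>LM\<^esub> cls (y, u) = cls ((u \<odot>\<^bsub>M\<^esub> x) \<oplus>\<^bsub>M\<^esub> (t \<odot>\<^bsub>M\<^esub> y), t \<otimes> u)"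
proof -
  obtain x' t' a where x: "loc_rep (cls (x, t)) = (x', t')" "x' \<in> carrier M" "t' \<in> T" "a \<in> T"
    "(a \<otimes> t') \<odot>\<^bsub>M\<^esub> x = (a \<otimes> t) \<odot>\<^bsub>M\<^esub> x'"
    by (rule loc_rep_obtain[OF assms(1,2)])
  obtain y' u' b where y: "loc_rep (cls (y, u)) = (y', u')" "y' \<in> carrier M" "u' \<in> T" "b \<in> T"
    "(b \<otimes> u') \<odot>\<^bsub>M\<^esub> y = (b \<otimes> u) \<odot>\<^bsub>M\<^esub> y'"
    by (rule loc_rep_obtain[OF assms(3,4)])
  note carr = assms x(2-4) y(2-4)
  have "((a \<otimes> b) \<otimes> (t' \<otimes> u')) \<odot>\<^bsub>M\<^esub> (u \<odot>\<^bsub>M\<^esub> x) = (b \<otimes> u' \<otimes> u) \<odot>\<^bsub>M\<^esub> ((a \<otimes> t') \<odot>\<^bsub>M\<^esub> x)"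
    using carr by (simp add: smult_assoc1[symmetric] m_ac)
  also have "\<dots> = ((a \<otimes> b) \<otimes> (t \<otimes> u)) \<odot>\<^bsub>M\<^esub> (u' \<odot>\<^bsub>M\<^esub> x')"
    unfolding x(5) using carr by (simp add: smult_assoc1[symmetric] m_ac)
  finally have ex: "((a \<otimes> b) \<otimes> (t' \<otimes> u')) \<odot>\<^bsub>M\<^esub> (u \<odot>\<^bsub>M\<^esub> x) = ((a \<otimes> b) \<otimes> (t \<otimes> u)) \<odot>\<^bsub>M\<^esub> (u' \<odot>\<^bsub>M\<^esub> x')" .
  have "((a \<otimes> b) \<otimes> (t' \<otimes> u')) \<odot>\<^bsub>M\<^esub> (t \<odot>\<^bsub>M\<^esub> y) = (a \<otimes> t' \<otimes> t) \<odot>\<^bsub>M\<^esub> ((b \<otimes> u') \<odot>\<^bsub>M\<^esub> y)"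
    using carr by (simp add: smult_assoc1[symmetric] m_ac)
  also have "\<dots> = ((a \<otimes> b) \<otimes> (t \<otimes> u)) \<odot>\<^bsub>M\<^esub> (t' \<odot>\<^bsub>M\<^esub> y')"
    unfolding y(5) using carr by (simp add: smult_assoc1[symmetric] m_ac)
  finally have ey: "((a \<otimes> b) \<otimes> (t' \<otimes> u')) \<odot>\<^bsub>M\<^esub> (t \<odot>\<^bsub>M\<^esub> y) = ((a \<otimes> b) \<otimes> (t \<otimes> u)) \<odot>\<^bsub>M\<^esub> (t' \<odot>\<^bsub>M\<^esub> y')" .
  have "cls ((u \<odot>\<^bsub>M\<^esub> x) \<oplus>\<^bsub>M\<^esub> (t \<odot>\<^bsub>M\<^esub> y), t \<otimes> u) = cls ((u' \<odot>\<^bsub>M\<^esub> x') \<oplus>\<^bsub>M\<^esub> (t' \<odot>\<^bsub>M\<^esub> y'), t' \<otimes> u')"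
    using carr T_mult ex ey
    by (subst cls_eq_iff) (auto simp: loc_eq_def smult_r_distr intro!: bexI[of _ "a \<otimes> b"])
  then show ?thesis
    unfolding loc_module_def loc_add_def using x(1) y(1) by simp
qed

lemma a_inv_cls:
  assumes x: "x \<in> carrier M" and t: "t \<in> T"
  shows "\<ominus>\<^bsub>LM\<^esub> cls (x, t) = cls (\<ominus>\<^bsub>M\<^esub> x, t)"
proof -
  have sum_zero: "cls (x, t) \<oplus>\<^bsub>LM\<^esub> cls (\<ominus>\<^bsub>M\<^esub> x, t) = \<zero>\<^bsub>LM\<^esub>"
    "cls (\<ominus>\<^bsub>M\<^esub> x, t) \<oplus>\<^bsub>LM\<^esub> cls (x, t) = \<zero>\<^bsub>LM\<^esub>"
    using x t T_mult by (simp_all add: add_cls smult_r_minus r_neg l_neg cls_zero)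
  have unique: "z = cls (\<ominus>\<^bsub>M\<^esub> x, t)"
    if z: "z \<in> carrier LM" "cls (x, t) \<oplus>\<^bsub>LM\<^esub> z = \<zero>\<^bsub>LM\<^esub>" for z
  proof -
    obtain w u where wu: "z = cls (w, u)" "w \<in> carrier M" "u \<in> T"
      using z(1) unfolding carrier_loc_module by blast
    have "cls ((u \<odot>\<^bsub>M\<^esub> x) \<oplus>\<^bsub>M\<^esub> (t \<odot>\<^bsub>M\<^esub> w), t \<otimes> u) = cls (\<zero>\<^bsub>M\<^esub>, \<one>)"
      using z(2) wu x t by (simp add: add_cls zero_loc_module)
    then obtain v where v: "v \<in> T"
      "v \<odot>\<^bsub>M\<^esub> ((u \<odot>\<^bsub>M\<^esub> x) \<oplus>\<^bsub>M\<^esub> (t \<odot>\<^bsub>M\<^esub> w)) = \<zero>\<^bsub>M\<^esub>"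
      using wu x t T_mult by (subst (asm) cls_eq_iff) (auto simp: loc_eq_def)
    then have "((v \<otimes> u) \<odot>\<^bsub>M\<^esub> x) \<oplus>\<^bsub>M\<^esub> ((v \<otimes> t) \<odot>\<^bsub>M\<^esub> w) = \<zero>\<^bsub>M\<^esub>"
      using x t wu by (simp add: smult_r_distr smult_assoc1)
    then have "(v \<otimes> t) \<odot>\<^bsub>M\<^esub> w = \<ominus>\<^bsub>M\<^esub> ((v \<otimes> u) \<odot>\<^bsub>M\<^esub> x)"
      using x t wu v(1) by (simp add: M.minus_equality[symmetric] M.a_comm)
    then have "loc_eq R M T (w, u) (\<ominus>\<^bsub>M\<^esub> x, t)"
      using x t wu v(1) by (auto simp: loc_eq_def smult_r_minus intro!: bexI[of _ v])
    then show ?thesis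
      using wu cls_eq_iff by simp
  qed
  have "cls (\<ominus>\<^bsub>M\<^esub> x, t) \<in> carrier LM"
    using x t unfolding carrier_loc_module by blast
  with sum_zero show ?thesis
    unfolding a_inv_def[of LM] m_inv_def
    by (intro the_equality) (simp_all add: unique)
qed

lemma rcls_in_carrier: "r \<in> carrier R \<Longrightarrow> t \<in> T \<Longrightarrow> rcls (r, t) \<in> carrier LR"
  unfolding carrier_loc_ring by blast

lemma submodule_loc_extension:
  assumes N: "submodule N R M"
  shows "submodule (loc_extension R M T N) LR LM"
proof -
  have NC: "N \<subseteq> carrier M"
    using submodule.subset_carrier[OF N] .
  show ?thesis
  proof (intro submodule.intro subgroup.intro submodule_axioms.intro)
    show "loc_extension R M T N \<subseteq> carrier (add_monoid LM)"
      using NC unfolding loc_extension_def carrier_loc_module by auto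
    show "\<one>\<^bsub>add_monoid LM\<^esub> \<in> loc_extension R M T N"
      using submodule.zero_closed[OF N] T_one unfolding loc_extension_def zero_loc_module by auto
  next
    fix X Y assume "X \<in> loc_extension R M T N" "Y \<in> loc_extension R M T N"
    then obtain x t y u where "X = cls (x, t)" "Y = cls (y, u)" "x \<in> N" "y \<in> N" "t \<in> T" "u \<in> T"
      unfolding loc_extension_def by blast
    moreover have "(u \<odot>\<^bsub>M\<^esub> x) \<oplus>\<^bsub>M\<^esub> (t \<odot>\<^bsub>M\<^esub> y) \<in> N"
      using calculation submodule.a_closed[OF N] submodule.smult_closed[OF N] by simp
    ultimately show "X \<otimes>\<^bsub>add_monoid LM\<^esub> Y \<in> loc_extension R M T N"
      unfolding loc_extension_def using NC T_mult
      by (simp add: add_cls subsetD)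
  next
    fix X assume "X \<in> loc_extension R M T N"
    then obtain x t where "X = cls (x, t)" "x \<in> N" "t \<in> T"
      unfolding loc_extension_def by blast
    then show "inv\<^bsub>add_monoid LM\<^esub> X \<in> loc_extension R M T N"
      using NC submodule.a_inv_closed[OF N] a_inv_cls[of x t]
      unfolding loc_extension_def a_inv_def by auto
  next
    fix A X assume "A \<in> carrier LR" "X \<in> loc_extension R M T N"
    then obtain r u x t where "A = rcls (r, u)" "r \<in> carrier R" "u \<in> T"
      and "X = cls (x, t)" "x \<in> N" "t \<in> T"
      unfolding carrier_loc_ring loc_extension_def by blast
    then show "A \<odot>\<^bsub>LM\<^esub> X \<in> loc_extension R M T N"
      using NC T_mult submodule.smult_closed[OF N] unfolding loc_extension_def by (auto simp: smult_cls)
  qed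
qed

lemma cls_mem_rescale:
  assumes L: "submodule L LR LM" and x: "x \<in> carrier M" and tu: "t \<in> T" "u \<in> T"
    and mem: "cls (x, t) \<in> L"
  shows "cls (x, u) \<in> L"
proof -
  have "rcls (t, u) \<odot>\<^bsub>LM\<^esub> cls (x, t) = cls (t \<odot>\<^bsub>M\<^esub> x, u \<otimes> t)"
    using x tu by (simp add: smult_cls)
  also have "\<dots> = cls (x, u)"
    using x tu by (simp add: cls_scale)
  finally show ?thesis
    using submodule.smult_closed[OF L rcls_in_carrier[of t u] mem] tu by simp
qed

lemma mem_loc_contraction:
  "submodule L LR LM \<Longrightarrow> x \<in> carrier M \<Longrightarrow> t \<in> T \<Longrightarrow> cls (x, t) \<in> L \<Longrightarrow>
    x \<in> loc_contraction R M T L"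
  unfolding loc_contraction_def using cls_mem_rescale by blast

lemma submodule_loc_contraction:
  assumes L: "submodule L LR LM"
  shows "submodule (loc_contraction R M T L) R M"
proof (rule submoduleI)
  show "loc_contraction R M T L \<subseteq> carrier M"
    unfolding loc_contraction_def by blast
  show "\<zero>\<^bsub>M\<^esub> \<in> loc_contraction R M T L"
    using submodule.zero_closed[OF L] unfolding loc_contraction_def by (simp add: cls_zero)
next
  fix x assume "x \<in> loc_contraction R M T L"
  then have x: "x \<in> carrier M" "cls (x, \<one>) \<in> L"
    unfolding loc_contraction_def using T_one by auto
  then have "cls (\<ominus>\<^bsub>M\<^esub> x, \<one>) \<in> L"
    using submodule.a_inv_closed[OF L x(2)] a_inv_cls[OF x(1) T_one] by simp
  then show "\<ominus>\<^bsub>M\<^esub> x \<in> loc_contraction R M T L"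
    using x T_one by (intro mem_loc_contraction[OF L]) simp_all
next
  fix x y assume "x \<in> loc_contraction R M T L" "y \<in> loc_contraction R M T L"
  then have xy: "x \<in> carrier M" "y \<in> carrier M" "cls (x, \<one>) \<in> L" "cls (y, \<one>) \<in> L"
    unfolding loc_contraction_def using T_one by auto
  then have "cls (x, \<one>) \<oplus>\<^bsub>LM\<^esub> cls (y, \<one>) \<in> L"
    using submodule.a_closed[OF L] by blast
  then have "cls (x \<oplus>\<^bsub>M\<^esub> y, \<one>) \<in> L"
    using xy T_one by (simp add: add_cls)
  then show "x \<oplus>\<^bsub>M\<^esub> y \<in> loc_contraction R M T L"
    using xy T_one by (intro mem_loc_contraction[OF L]) simp_all
next
  fix r x assume r: "r \<in> carrier R" and "x \<in> loc_contraction R M T L"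
  then have x: "x \<in> carrier M" "cls (x, \<one>) \<in> L"
    unfolding loc_contraction_def using T_one by auto
  then have "rcls (r, \<one>) \<odot>\<^bsub>LM\<^esub> cls (x, \<one>) \<in> L"
    using submodule.smult_closed[OF L rcls_in_carrier] r T_one by blast
  then have "cls (r \<odot>\<^bsub>M\<^esub> x, \<one>) \<in> L"
    using r x T_one by (simp add: smult_cls)
  then show "r \<odot>\<^bsub>M\<^esub> x \<in> loc_contraction R M T L"
    using r x T_one by (intro mem_loc_contraction[OF L]) simp_all
qed

lemma mod_span_subset_loc_contraction:
  assumes G: "G \<subseteq> carrier M"
  shows "mod_span R M G \<subseteq> loc_contraction R M T (mod_span LR LM ((\<lambda>g. cls (g, \<one>)) ` G))"
proof -
  have "x \<in> loc_contraction R M T L"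
    if x: "x \<in> mod_span R M G" and L: "submodule L LR LM" "(\<lambda>g. cls (g, \<one>)) ` G \<subseteq> L" for x L
  proof -
    have "G \<subseteq> loc_contraction R M T L"
      using G L T_one mem_loc_contraction[OF L(1)] by blast
    then show ?thesis
      using x mod_span_least[OF submodule_loc_contraction[OF L(1)]] by blast
  qed
  moreover have "mod_span R M G \<subseteq> carrier M"
    using submodule.subset_carrier[OF submodule_mod_span[OF module_axioms G]] .
  ultimately show ?thesis
    unfolding loc_contraction_def mod_span_def[of LR] by blast
qed

lemma loc_extension_memD:
  assumes N: "submodule N R M" and x: "x \<in> carrier M" and t: "t \<in> T"
    and mem: "cls (x, t) \<in> loc_extension R M T N"
  shows "x \<in> saturation R M T N"
proof -
  obtain y w where y: "y \<in> N" "w \<in> T" "cls (x, t) = cls (y, w)"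
    using mem unfolding loc_extension_def by blast
  then obtain v where v: "v \<in> T" "(v \<otimes> w) \<odot>\<^bsub>M\<^esub> x = (v \<otimes> t) \<odot>\<^bsub>M\<^esub> y"
    using x t by (auto simp: cls_eq_iff loc_eq_def)
  have "(v \<otimes> w) \<odot>\<^bsub>M\<^esub> x \<in> N"
    unfolding v(2) using submodule.smult_closed[OF N] v(1) t y(1) T_mult by simp
  then show ?thesis
    unfolding saturation_def using x T_mult[OF v(1) y(2)] by blast
qed

lemma S_noetherian_loc_module:
  assumes SN: "S_noetherian R M S" and S: "S \<subseteq> carrier R"
  shows "S_noetherian LR LM (loc_image R T S)"
  unfolding S_noetherian_def
proof (intro allI impI)
  fix L assume L: "submodule L LR LM"
  obtain s F where s: "s \<in> S" and F: "fin_gen_submodule R M F"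
    and sF: "\<forall>x\<in>loc_contraction R M T L. s \<odot>\<^bsub>M\<^esub> x \<in> F" and FL: "F \<subseteq> loc_contraction R M T L"
    using SN submodule_loc_contraction[OF L] unfolding S_noetherian_def S_finite_def by blast
  obtain G where G: "finite G" "G \<subseteq> carrier M" "F = mod_span R M G"
    using F unfolding fin_gen_submodule_def by blast
  define F' where "F' = mod_span LR LM ((\<lambda>g. cls (g, \<one>)) ` G)"
  have "fin_gen_submodule LR LM F'"
    unfolding fin_gen_submodule_def F'_def using G(1,2) T_one
    by (intro exI[of _ "(\<lambda>g. cls (g, \<one>)) ` G"]) (auto simp: carrier_loc_module)
  moreover have "F' \<subseteq> L"
    unfolding F'_def
  proof (rule mod_span_least[OF L], safe)
    fix g assume "g \<in> G"
    then have "g \<in> loc_contraction R M T L"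
      using mod_span_incl[of G R M] G(3) FL by blast
    then show "cls (g, \<one>) \<in> L"
      using T_one unfolding loc_contraction_def by blast
  qed
  moreover have "rcls (s, \<one>) \<odot>\<^bsub>LM\<^esub> X \<in> F'" if X: "X \<in> L" for X
  proof -
    obtain x t where xt: "X = cls (x, t)" "x \<in> carrier M" "t \<in> T"
      using X submodule.subset_carrier[OF L] unfolding carrier_loc_module by blast
    then have "s \<odot>\<^bsub>M\<^esub> x \<in> F"
      using sF mem_loc_contraction[OF L] X by blast
    then have "cls (s \<odot>\<^bsub>M\<^esub> x, t) \<in> F'"
      using mod_span_subset_loc_contraction[OF G(2)] xt(3)
      unfolding F'_def G(3) loc_contraction_def by blast
    moreover have "s \<in> carrier R"
      using s S by blast
    ultimately show ?thesis
      using xt T_one by (simp add: smult_cls)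
  qed
  moreover have "rcls (s, \<one>) \<in> loc_image R T S"
    unfolding loc_image_def using s by blast
  ultimately show "S_finite LR LM (loc_image R T S) L"
    unfolding S_finite_def by blast
qed

lemma finite_subset_loc_extension:
  assumes "finite G" "G \<subseteq> loc_extension R M T N"
  obtains Y where "finite Y" "Y \<subseteq> N" "G \<subseteq> loc_extension R M T (mod_span R M Y)"
proof -
  obtain C where C: "C \<subseteq> N \<times> T" "finite C" "G = cls ` C"
    using finite_subset_image[OF assms[unfolded loc_extension_def]] by blast
  have "G \<subseteq> loc_extension R M T (mod_span R M (fst ` C))"
    unfolding loc_extension_def C(3) using C(1) mod_span_incl[of "fst ` C" R M] by force
  moreover have "fst ` C \<subseteq> N"
    using C(1) by auto
  ultimately show thesis
    using that[OF finite_imageI[OF C(2)]] by blast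
qed

lemma S_noetherian_loc_moduleD:
  assumes SN: "S_noetherian LR LM (loc_image R T S)" and S: "S \<subseteq> carrier R"
    and N: "submodule N R M"
  shows "\<exists>s\<in>S. \<exists>Y. finite Y \<and> Y \<subseteq> N \<and> (\<forall>x\<in>N. s \<odot>\<^bsub>M\<^esub> x \<in> saturation R M T (mod_span R M Y))"
proof -
  have NC: "N \<subseteq> carrier M"
    using submodule.subset_carrier[OF N] .
  obtain s' F' where s': "s' \<in> loc_image R T S" and F': "fin_gen_submodule LR LM F'"
    and sF': "\<forall>X\<in>loc_extension R M T N. s' \<odot>\<^bsub>LM\<^esub> X \<in> F'" and F'N: "F' \<subseteq> loc_extension R M T N"
    using SN submodule_loc_extension[OF N] unfolding S_noetherian_def S_finite_def by blast
  obtain s where s: "s \<in> S" "s' = rcls (s, \<one>)"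
    using s' unfolding loc_image_def by blast
  obtain G' where G': "finite G'" "F' = mod_span LR LM G'"
    using F' unfolding fin_gen_submodule_def by blast
  obtain Y where Y: "finite Y" "Y \<subseteq> N" and G'Y: "G' \<subseteq> loc_extension R M T (mod_span R M Y)"
    using finite_subset_loc_extension[OF G'(1)] mod_span_incl[of G' LR LM] G'(2) F'N by blast
  have spanY: "submodule (mod_span R M Y) R M"
    using submodule_mod_span[OF module_axioms] Y(2) NC by blast
  have F'Y: "F' \<subseteq> loc_extension R M T (mod_span R M Y)"
    unfolding G'(2) by (rule mod_span_least[OF submodule_loc_extension[OF spanY] G'Y])
  have "s \<odot>\<^bsub>M\<^esub> x \<in> saturation R M T (mod_span R M Y)" if x: "x \<in> N" for x
  proof -
    have carr: "x \<in> carrier M" "s \<in> carrier R"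
      using x NC s(1) S by blast+
    have "cls (x, \<one>) \<in> loc_extension R M T N"
      unfolding loc_extension_def using x T_one by blast
    then have "s' \<odot>\<^bsub>LM\<^esub> cls (x, \<one>) \<in> loc_extension R M T (mod_span R M Y)"
      using sF' F'Y by blast
    moreover have "s' \<odot>\<^bsub>LM\<^esub> cls (x, \<one>) = cls (s \<odot>\<^bsub>M\<^esub> x, \<one>)"
      unfolding s(2) using carr T_one by (simp add: smult_cls)
    ultimately show ?thesis
      using loc_extension_memD[OF spanY _ T_one] carr by simp
  qed
  with s(1) Y show ?thesis
    by blast
qed

end

lemma module_localization_primeideal:
  fixes M :: "('a, 'b) module"
  assumes M: "module R M" and P: "primeideal P R"
  shows "module_localization R M (carrier R - P)"
proof -
  interpret primeideal P R by fact
  show ?thesis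
  proof (intro module_localization.intro module_localization_axioms.intro)
    show "\<one>\<^bsub>R\<^esub> \<in> carrier R - P"
      using I_notcarr one_imp_carrier by blast
    show "s \<otimes>\<^bsub>R\<^esub> t \<in> carrier R - P" if "s \<in> carrier R - P" "t \<in> carrier R - P" for s t
      using that I_prime by blast
  qed (use M in auto)
qed

lemma S_finite_zero_submodule:
  fixes M :: "('a, 'b) module"
  assumes M: "module R M" and S: "\<one>\<^bsub>R\<^esub> \<in> S" and N: "submodule N R M" "N \<subseteq> {\<zero>\<^bsub>M\<^esub>}"
  shows "S_finite R M S N"
proof -
  interpret module R M by fact
  have "fin_gen_submodule R M (mod_span R M {})"
    unfolding fin_gen_submodule_def by (intro exI[of _ "{}"]) simp
  moreover have "mod_span R M {} \<subseteq> N"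
    using mod_span_least[OF N(1)] by blast
  moreover have "\<one>\<^bsub>R\<^esub> \<odot>\<^bsub>M\<^esub> x \<in> mod_span R M {}" if "x \<in> N" for x
  proof -
    have "x = \<zero>\<^bsub>M\<^esub>"
      using that N(2) by blast
    then show ?thesis
      using submodule.zero_closed[OF submodule_mod_span[OF M, of "{}"]] by simp
  qed
  ultimately show ?thesis
    unfolding S_finite_def
    by (intro bexI[of _ "\<one>\<^bsub>R\<^esub>"] exI[of _ "mod_span R M {}"] conjI) (use S in simp_all)
qed

lemma S_noetherian_imp_locally_S_noetherian:
  fixes M :: "('a, 'b) module"
  assumes M: "module R M" and S: "mult_subset R S" and SN: "S_noetherian R M S"
  shows "locally_S_noetherian R M S"
  unfolding locally_S_noetherian_def
proof (intro allI impI)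
  interpret module R M by fact
  fix P assume "maximalideal P R"
  then have "module_localization R M (carrier R - P)"
    using module_localization_primeideal[OF M maximalideal_prime] by blast
  then show "S_noetherian (loc_ring R (carrier R - P)) (loc_module R M (carrier R - P))
               (loc_image R (carrier R - P) S)"
    using module_localization.S_noetherian_loc_module SN S unfolding mult_subset_def by blast
qed

lemma locally_S_noetherianD:
  fixes M :: "('a, 'b) module"
  assumes M: "module R M" and S: "mult_subset R S" and loc: "locally_S_noetherian R M S"
    and P: "maximalideal P R" and N: "submodule N R M"
  shows "\<exists>s\<in>S. \<exists>Y. finite Y \<and> Y \<subseteq> N \<and>
           (\<forall>x\<in>N. s \<odot>\<^bsub>M\<^esub> x \<in> saturation R M (carrier R - P) (mod_span R M Y))"
proof -
  interpret module R M by fact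
  have "module_localization R M (carrier R - P)"
    using module_localization_primeideal[OF M maximalideal_prime[OF P]] .
  moreover have "S_noetherian (loc_ring R (carrier R - P)) (loc_module R M (carrier R - P))
                   (loc_image R (carrier R - P) S)"
    using loc P unfolding locally_S_noetherian_def by blast
  moreover have "S \<subseteq> carrier R"
    using S unfolding mult_subset_def by blast
  ultimately show ?thesis
    using N by (rule module_localization.S_noetherian_loc_moduleD)
qed

lemma S_finite_if_locally_S_noetherian:
  fixes M :: "('a, 'b) module"
  assumes M: "module R M" and S: "mult_subset R S"
    and loc: "locally_S_noetherian R M S" and fc: "finite_character R M"
    and N: "submodule N R M" and a: "a \<in> N" "a \<noteq> \<zero>\<^bsub>M\<^esub>"
  shows "S_finite R M S N"
proof -
  have NC: "N \<subseteq> carrier M"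
    using submodule.subset_carrier[OF N] .
  let ?A = "{P. maximalideal P R \<and> mod_colon R M (cyclic_sub R M a) \<subseteq> P}"
  have "finite ?A"
    using finite_character_finite_maximalideals[OF fc] a NC by blast
  then have "\<exists>s\<in>S. \<exists>Y. finite Y \<and> Y \<subseteq> N \<and>
               (\<forall>P\<in>?A. \<forall>x\<in>N. s \<odot>\<^bsub>M\<^esub> x \<in> saturation R M (carrier R - P) (mod_span R M Y))"
    using locally_S_noetherianD[OF M S loc _ N] by (intro ex_common_S_witness[OF M S NC]) auto
  then obtain s Y where s: "s \<in> S" "finite Y" "Y \<subseteq> N"
    and sY: "\<forall>P\<in>?A. \<forall>x\<in>N. s \<odot>\<^bsub>M\<^esub> x \<in> saturation R M (carrier R - P) (mod_span R M Y)"
    by blast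
  have sc: "s \<in> carrier R"
    using s(1) S unfolding mult_subset_def by blast
  let ?J = "mod_span R M (insert a Y)"
  have "s \<odot>\<^bsub>M\<^esub> x \<in> ?J" if x: "x \<in> N" for x
  proof (rule mem_mod_span_insert_if_locally[OF M])
    show "Y \<subseteq> carrier M" "a \<in> carrier M" "s \<odot>\<^bsub>M\<^esub> x \<in> carrier M"
      using s(3) a(1) x NC sc module.smult_closed[OF M] by auto
    fix P assume "maximalideal P R" "mod_colon R M (cyclic_sub R M a) \<subseteq> P"
    then show "s \<odot>\<^bsub>M\<^esub> x \<in> saturation R M (carrier R - P) (mod_span R M Y)"
      using sY x by blast
  qed
  moreover have "fin_gen_submodule R M ?J"
    unfolding fin_gen_submodule_def using s(2,3) a(1) NC by (intro exI[of _ "insert a Y"]) auto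
  moreover have "?J \<subseteq> N"
    using mod_span_least[OF N] s(3) a(1) by blast
  ultimately show ?thesis
    unfolding S_finite_def using s(1) by (intro bexI[of _ s] exI[of _ ?J]) blast+
qed

lemma S_noetherian_if_locally_S_noetherian:
  fixes M :: "('a, 'b) module"
  assumes M: "module R M" and S: "mult_subset R S"
    and loc: "locally_S_noetherian R M S" and fc: "finite_character R M"
  shows "S_noetherian R M S"
  unfolding S_noetherian_def
proof (intro allI impI)
  fix N assume N: "submodule N R M"
  show "S_finite R M S N"
  proof (cases "N \<subseteq> {\<zero>\<^bsub>M\<^esub>}")
    case True
    moreover have "\<one>\<^bsub>R\<^esub> \<in> S"
      using S unfolding mult_subset_def by blast
    ultimately show ?thesis
      using S_finite_zero_submodule[OF M _ N] by blast
  next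
    case False
    then obtain a where "a \<in> N" "a \<noteq> \<zero>\<^bsub>M\<^esub>"
      by blast
    then show ?thesis
      using S_finite_if_locally_S_noetherian[OF M S loc fc N] by blast
  qed
qed

theorem proposition2p4:
  fixes D :: "'a ring" and M :: "('a, 'b) module" and S :: "'a set"
  assumes "domain D"
    and "module D M"
    and "mult_subset D S"
    and "torsion_free D M"
  shows "(S_noetherian D M S \<longrightarrow> locally_S_noetherian D M S)
       \<and> (locally_S_noetherian D M S \<and> finite_character D M \<longrightarrow> S_noetherian D M S)"
  using S_noetherian_imp_locally_S_noetherian[OF assms(2,3)]
    S_noetherian_if_locally_S_noetherian[OF assms(2,3)] by blast

end
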